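(* Let $X$ be a connected weighted bipartite graph with vertex $u$. If $\theta\in\Phi_{\mathbf e_u}\setminus\{0\}$, then $(E_\theta)_{u,u}\le \frac12$. If additionally $0\in\Phi_{\mathbf e_u}$, then $(E_\theta)_{u,u}<\frac12$.
   Context: Graphs are simple, connected, undirected, with nonzero real edge weights; $A=A(X)$ is the weighted adjacency matrix with spectral decomposition $A=\sum_\lambda \lambda E_\lambda$ over its distinct eigenvalues, $E_\lambda$ being the orthogonal projection onto the $\lambda$-eigenspace. The eigenvalue support of $u$ is $\Phi_{\mathbf e_u}=\{\lambda: E_\lambda\mathbf e_u\ne 0\}$. *)

theory Defs
  imports "HOL-Analysis.Analysis"
begin

text \<open>A weighted graph on the finite vertex type 'n is given by its weighted adjacency
matrix A: real symmetric with zero diagonal; i and j are adjacent iff A i j is nonzero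
(so edge weights are nonzero reals and the graph is simple and undirected).\<close>

definition weighted_adjacency :: "real^'n^'n \<Rightarrow> bool" where
  "weighted_adjacency A \<longleftrightarrow> transpose A = A \<and> (\<forall>i. A $ i $ i = 0)"

definition adjacent :: "real^'n^'n \<Rightarrow> 'n \<Rightarrow> 'n \<Rightarrow> bool" where
  "adjacent A i j \<longleftrightarrow> A $ i $ j \<noteq> 0"

definition graph_connected :: "real^'n^'n \<Rightarrow> bool" where
  "graph_connected A \<longleftrightarrow> (\<forall>i j. (adjacent A)\<^sup>*\<^sup>* i j)"

definition graph_bipartite :: "real^'n^'n \<Rightarrow> bool" where
  "graph_bipartite A \<longleftrightarrow> (\<exists>S. \<forall>i j. adjacent A i j \<longrightarrow> (i \<in> S \<longleftrightarrow> j \<notin> S))"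

definition eigenspace :: "real^'n^'n \<Rightarrow> real \<Rightarrow> (real^'n) set" where
  "eigenspace A t = {x. A *v x = t *s x}"

text \<open>Orthogonal projection matrix onto the lambda-eigenspace (zero if lambda is not an eigenvalue).\<close>
definition eigenproj :: "real^'n^'n \<Rightarrow> real \<Rightarrow> real^'n^'n" where
  "eigenproj A t = (THE P. P ** P = P \<and> transpose P = P \<and> range (\<lambda>x. P *v x) = eigenspace A t)"

definition eig_support :: "real^'n^'n \<Rightarrow> 'n \<Rightarrow> real set" where
  "eig_support A u = {t. eigenproj A t *v axis u 1 \<noteq> 0}"

end

theory Submission
  imports Defs
begin

text \<open>Let \<open>D\<close> be the diagonal matrix with entries \<open>\<plusminus>1\<close> according to the side of the
bipartition. Bipartiteness says \<open>A D = - D A\<close>, so \<open>D\<close> maps the \<open>\<theta>\<close>-eigenspace onto the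
\<open>-\<theta>\<close>-eigenspace, hence \<open>E(-\<theta>) = D E(\<theta>) D\<close> has the same \<open>(u,u)\<close> entry as \<open>E(\<theta>)\<close>.
Each diagonal entry \<open>E(\<lambda>)\<^sub>u\<^sub>u = \<parallel>E(\<lambda>) e\<^sub>u\<parallel>\<^sup>2\<close> is nonnegative, and positive exactly for
\<open>\<lambda>\<close> in the eigenvalue support of \<open>u\<close>. Eigenprojections of distinct eigenvalues have
orthogonal ranges, so by Pythagoras their \<open>(u,u)\<close> entries add up to at most
\<open>\<parallel>e\<^sub>u\<parallel>\<^sup>2 = 1\<close>. For \<open>\<theta>\<close>, \<open>-\<theta>\<close>, \<open>0\<close> this reads \<open>2 E(\<theta>)\<^sub>u\<^sub>u + E(0)\<^sub>u\<^sub>u \<le> 1\<close>.\<close>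

lemma idempotent_matrix_absorbs:
  fixes P Q :: "real^'n^'n"
  assumes "P ** P = P" and "range ((*v) Q) \<subseteq> range ((*v) P)"
  shows "P ** Q = Q"
proof (subst matrix_eq, intro allI)
  fix x
  obtain y where y: "Q *v x = P *v y" using assms(2) by blast
  have "(P ** Q) *v x = (P ** P) *v y" by (simp add: y flip: matrix_vector_mul_assoc)
  then show "(P ** Q) *v x = Q *v x" using assms(1) y by simp
qed

lemma projection_matrix_unique:
  fixes P Q :: "real^'n^'n"
  assumes "P ** P = P" "transpose P = P" "Q ** Q = Q" "transpose Q = Q"
    and "range ((*v) P) = range ((*v) Q)"
  shows "P = Q"
proof -
  have "P = transpose (Q ** P)"
    using idempotent_matrix_absorbs[of Q P] assms by simp
  also have "\<dots> = P ** Q" by (simp add: matrix_transpose_mul assms)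
  also have "\<dots> = Q" using idempotent_matrix_absorbs[of P Q] assms by simp
  finally show ?thesis .
qed

lemma projection_matrix_exists:
  fixes V :: "(real^'n) set"
  assumes "subspace V"
  obtains P where "P ** P = P" "transpose P = P" "range ((*v) P) = V"
proof -
  obtain B where B: "B \<subseteq> V" "pairwise orthogonal B" "\<And>x. x \<in> B \<Longrightarrow> norm x = 1"
    "independent B" "span B = V"
    by (metis orthonormal_basis_subspace [OF assms])
  have fin: "finite B" using B(4) independent_imp_finite by blast
  define P :: "real^'n^'n" where "P = (\<chi> i j. \<Sum>b\<in>B. b$i * b$j)"
  have Pv: "P *v x = (\<Sum>b\<in>B. (b \<bullet> x) *\<^sub>R b)" for x
    unfolding P_def
    by (simp add: vec_eq_iff matrix_vector_mult_def inner_vec_def sum_component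
        sum_distrib_left sum_distrib_right sum.swap[of _ B] mult_ac)
  have range_in: "P *v x \<in> V" for x
    unfolding Pv B(5)[symmetric] by (intro span_sum span_scale span_base)
  have inner_basis: "c \<bullet> (P *v x) = c \<bullet> x" if "c \<in> B" for c x
  proof -
    have "c \<bullet> (P *v x) = (\<Sum>b\<in>B. (b \<bullet> x) * (c \<bullet> b))" by (simp add: Pv inner_sum_right)
    also have "\<dots> = (\<Sum>b\<in>{c}. (b \<bullet> x) * (c \<bullet> b))"
      by (rule sum.mono_neutral_right)
        (use fin that B(2) in \<open>auto simp: pairwise_def orthogonal_def\<close>)
    also have "\<dots> = c \<bullet> x" using B(3)[OF that] by (simp add: norm_eq_1 inner_commute)
    finally show ?thesis .
  qed
  have fixes_V: "P *v v = v" if "v \<in> V" for v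
  proof -
    have "P *v v - v \<in> span B"
      using range_in that B(5) by (metis span_diff span_superset subsetD)
    moreover have "orthogonal (P *v v - v) c" if "c \<in> B" for c
      using inner_basis[OF that, of v]
      by (simp add: orthogonal_def inner_diff_left inner_diff_right inner_commute)
    ultimately have "orthogonal (P *v v - v) (P *v v - v)" by (rule orthogonal_to_span)
    then show ?thesis by (simp add: orthogonal_def)
  qed
  show ?thesis
  proof
    show "P ** P = P"
      by (subst matrix_eq) (simp add: range_in fixes_V flip: matrix_vector_mul_assoc)
    show "transpose P = P" unfolding P_def by (simp add: transpose_def vec_eq_iff mult.commute)
    show "range ((*v) P) = V" using range_in fixes_V by (auto, metis rangeI)
  qed
qed

lemma projection_matrix_diag:
  fixes P :: "real^'n^'n"
  assumes "P ** P = P" "transpose P = P"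
  shows "P $ u $ u = axis u 1 \<bullet> (P *v axis u 1)"
    and "P $ u $ u = (norm (P *v axis u 1))\<^sup>2"
proof -
  show diag: "P $ u $ u = axis u 1 \<bullet> (P *v axis u 1)"
    by (simp add: inner_axis' matrix_vector_mult_basis column_def)
  have "axis u 1 \<bullet> (P *v axis u 1) = axis u 1 \<bullet> (P *v (P *v axis u 1))"
    by (simp add: matrix_vector_mul_assoc assms(1))
  also have "\<dots> = (P *v axis u 1) \<bullet> (P *v axis u 1)"
    by (metis dot_lmul_matrix transpose_matrix_vector assms(2))
  finally show "P $ u $ u = (norm (P *v axis u 1))\<^sup>2"
    by (simp add: diag power2_norm_eq_inner)
qed

lemma subspace_eigenspace: "subspace (eigenspace A t)"
  unfolding subspace_def eigenspace_def
  by (auto simp: matrix_vector_right_distrib scalar_mult_eq_scaleR matrix_vector_mult_scaleR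
      scaleR_add_right)

lemma eigenproj_projection:
  "eigenproj A t ** eigenproj A t = eigenproj A t"
  "transpose (eigenproj A t) = eigenproj A t"
  "range ((*v) (eigenproj A t)) = eigenspace A t"
proof -
  obtain P where P: "P ** P = P" "transpose P = P" "range ((*v) P) = eigenspace A t"
    using projection_matrix_exists[OF subspace_eigenspace] .
  have "eigenproj A t = P"
    unfolding eigenproj_def
  proof (rule the_equality)
    fix Q assume "Q ** Q = Q \<and> transpose Q = Q \<and> range ((*v) Q) = eigenspace A t"
    with P show "Q = P" by (metis projection_matrix_unique)
  qed (use P in simp)
  with P show "eigenproj A t ** eigenproj A t = eigenproj A t"
    "transpose (eigenproj A t) = eigenproj A t"
    "range ((*v) (eigenproj A t)) = eigenspace A t" by simp_all
qed

lemma eigenproj_eqI: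
  assumes "P ** P = P" "transpose P = P" "range ((*v) P) = eigenspace A t"
  shows "eigenproj A t = P"
  using projection_matrix_unique eigenproj_projection assms by metis

lemma eigenproj_diag_nonneg: "0 \<le> eigenproj A t $ u $ u"
  by (simp add: projection_matrix_diag(2) eigenproj_projection)

lemma eigenproj_diag_pos_iff: "0 < eigenproj A t $ u $ u \<longleftrightarrow> t \<in> eig_support A u"
  by (simp add: projection_matrix_diag(2) eigenproj_projection eig_support_def)

lemma symmetric_eigenspaces_orthogonal:
  fixes A :: "real^'n^'n"
  assumes "transpose A = A" "x \<in> eigenspace A s" "y \<in> eigenspace A t" "s \<noteq> t"
  shows "orthogonal x y"
proof -
  have "x \<bullet> (A *v y) = (A *v x) \<bullet> y"
    by (metis dot_lmul_matrix transpose_matrix_vector assms(1))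
  then have "t * (x \<bullet> y) = s * (x \<bullet> y)"
    using assms(2,3) by (simp add: eigenspace_def scalar_mult_eq_scaleR)
  then show ?thesis using assms(4) by (simp add: orthogonal_def)
qed

lemma sum_eigenproj_diag_le_one:
  fixes A :: "real^'n^'n"
  assumes "transpose A = A" and "finite T"
  shows "(\<Sum>t\<in>T. eigenproj A t $ u $ u) \<le> 1"
proof -
  define e :: "real^'n" where "e = axis u 1"
  define p where "p t = eigenproj A t *v e" for t
  have diag: "eigenproj A t $ u $ u = e \<bullet> p t" "eigenproj A t $ u $ u = (norm (p t))\<^sup>2" for t
    using projection_matrix_diag[OF eigenproj_projection(1,2)] by (simp_all add: e_def p_def)
  have "pairwise (\<lambda>s t. orthogonal (p s) (p t)) T"
    unfolding pairwise_def p_def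
    using symmetric_eigenspaces_orthogonal[OF assms(1)] eigenproj_projection(3) by blast
  then have pythagoras: "(norm (sum p T))\<^sup>2 = (\<Sum>t\<in>T. eigenproj A t $ u $ u)"
    by (simp add: norm_sum_Pythagorean[OF assms(2)] diag(2))
  have "0 \<le> (norm (e - sum p T))\<^sup>2" by simp
  also have "\<dots> = (norm e)\<^sup>2 - 2 * (e \<bullet> sum p T) + (norm (sum p T))\<^sup>2"
    by (simp add: power2_norm_eq_inner inner_diff_left inner_diff_right inner_commute)
  also have "e \<bullet> sum p T = (\<Sum>t\<in>T. eigenproj A t $ u $ u)"
    by (simp add: inner_sum_right diag(1))
  finally show ?thesis by (simp add: pythagoras e_def)
qed

definition bipartition :: "real^'n^'n \<Rightarrow> 'n set \<Rightarrow> bool" where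
  "bipartition A S \<longleftrightarrow> (\<forall>i j. adjacent A i j \<longrightarrow> (i \<in> S \<longleftrightarrow> j \<notin> S))"

definition signature_matrix :: "'n set \<Rightarrow> real^'n^'n" where
  "signature_matrix S = (\<chi> i j. if i = j then (if i \<in> S then 1 else -1) else 0)"

lemma signature_matrix_mult_left:
  "(signature_matrix S ** M) $ i $ j = (if i \<in> S then M $ i $ j else - M $ i $ j)"
  by (simp add: signature_matrix_def matrix_matrix_mult_def if_distrib[of "\<lambda>x. x * _"]
      sum.delta cong: if_cong)

lemma signature_matrix_mult_right:
  "(M ** signature_matrix S) $ i $ j = (if j \<in> S then M $ i $ j else - M $ i $ j)"
  by (simp add: signature_matrix_def matrix_matrix_mult_def if_distrib[of "\<lambda>x. _ * x"]
      sum.delta' cong: if_cong)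

lemma signature_matrix_involution: "signature_matrix S ** signature_matrix S = mat 1"
  by (simp add: vec_eq_iff signature_matrix_mult_left) (simp add: signature_matrix_def mat_def)

lemma transpose_signature_matrix: "transpose (signature_matrix S) = signature_matrix S"
  by (simp add: vec_eq_iff signature_matrix_def transpose_def)

lemma bipartite_signature_anticommutes:
  assumes "bipartition A S"
  shows "A ** signature_matrix S = - (signature_matrix S ** A)"
  using assms unfolding bipartition_def
  by (auto simp: vec_eq_iff signature_matrix_mult_left signature_matrix_mult_right adjacent_def)

lemma bipartite_signature_eigenspace:
  assumes "bipartition A S" and "x \<in> eigenspace A t"
  shows "signature_matrix S *v x \<in> eigenspace A (- t)"
proof -
  have neg: "(- M) *v y = - (M *v y)" for M :: "real^'n^'n" and y
    by (simp add: matrix_vector_mult_def vec_eq_iff sum_negf)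
  have "A *v (signature_matrix S *v x) = - (signature_matrix S *v (A *v x))"
    by (simp add: matrix_vector_mul_assoc bipartite_signature_anticommutes[OF assms(1)] neg)
  also have "\<dots> = (- t) *s (signature_matrix S *v x)"
    using assms(2) by (simp add: eigenspace_def scalar_mult_eq_scaleR matrix_vector_mult_scaleR)
  finally show ?thesis by (simp add: eigenspace_def)
qed

lemma bipartite_eigenproj_uminus:
  assumes "bipartition A S"
  shows "eigenproj A (- t) = signature_matrix S ** eigenproj A t ** signature_matrix S"
proof (rule eigenproj_eqI)
  let ?D = "signature_matrix S" and ?E = "eigenproj A t"
  have "?D ** ?E ** ?D ** (?D ** ?E ** ?D) = ?D ** ?E ** (?D ** ?D) ** ?E ** ?D"
    by (simp add: matrix_mul_assoc)
  also have "\<dots> = ?D ** (?E ** ?E) ** ?D"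
    by (simp add: signature_matrix_involution matrix_mul_assoc)
  finally show "?D ** ?E ** ?D ** (?D ** ?E ** ?D) = ?D ** ?E ** ?D"
    by (simp add: eigenproj_projection)
  show "transpose (?D ** ?E ** ?D) = ?D ** ?E ** ?D"
    by (simp add: matrix_transpose_mul transpose_signature_matrix eigenproj_projection
        matrix_mul_assoc)
  have flip: "?D *v (?D *v x) = x" for x
    by (simp add: matrix_vector_mul_assoc signature_matrix_involution)
  show "range ((*v) (?D ** ?E ** ?D)) = eigenspace A (- t)"
  proof (intro subset_antisym subsetI)
    fix y assume "y \<in> range ((*v) (?D ** ?E ** ?D))"
    then obtain x where "y = ?D *v (?E *v (?D *v x))"
      by (auto simp flip: matrix_vector_mul_assoc)
    moreover have "?E *v (?D *v x) \<in> eigenspace A t"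
      using eigenproj_projection(3) by blast
    ultimately show "y \<in> eigenspace A (- t)"
      using bipartite_signature_eigenspace[OF assms] by simp
  next
    fix y assume "y \<in> eigenspace A (- t)"
    then have "?D *v y \<in> range ((*v) ?E)"
      using bipartite_signature_eigenspace[OF assms, of y "- t"]
      by (simp only: eigenproj_projection(3) minus_minus)
    then obtain z where "?D *v y = ?E *v z" by blast
    then have "y = (?D ** ?E ** ?D) *v (?D *v z)"
      by (metis flip matrix_vector_mul_assoc)
    then show "y \<in> range ((*v) (?D ** ?E ** ?D))" by blast
  qed
qed

lemma bipartite_eigenproj_uminus_diag:
  assumes "graph_bipartite A"
  shows "eigenproj A (- t) $ u $ u = eigenproj A t $ u $ u"
proof -
  obtain S where S: "bipartition A S"
    using assms unfolding graph_bipartite_def bipartition_def by blast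
  show ?thesis
    by (simp add: bipartite_eigenproj_uminus[OF S] signature_matrix_mult_left
        signature_matrix_mult_right)
qed

theorem proposition10:
  fixes A :: "real^'n^'n" and u :: 'n and \<theta> :: real
  assumes "weighted_adjacency A" and "graph_connected A" and "graph_bipartite A"
    and "\<theta> \<in> eig_support A u - {0}"
  shows "eigenproj A \<theta> $ u $ u \<le> 1/2 \<and>
         (0 \<in> eig_support A u \<longrightarrow> eigenproj A \<theta> $ u $ u < 1/2)"
proof -
  have "\<theta> \<noteq> 0" using assms(4) by simp
  then have "(\<Sum>t\<in>{\<theta>, - \<theta>, 0}. eigenproj A t $ u $ u)
      = 2 * eigenproj A \<theta> $ u $ u + eigenproj A 0 $ u $ u"
    by (simp add: bipartite_eigenproj_uminus_diag[OF assms(3)])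
  moreover have "(\<Sum>t\<in>{\<theta>, - \<theta>, 0}. eigenproj A t $ u $ u) \<le> 1"
    using assms(1) by (simp add: sum_eigenproj_diag_le_one weighted_adjacency_def)
  ultimately show ?thesis
    using eigenproj_diag_nonneg[of A 0 u] eigenproj_diag_pos_iff[of A 0 u] by auto
qed

end
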